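(* Let $(X,\|\cdot,\cdot\|)$ be a $2$-normed space, $f:X\to X$, and $x_0\in X$. Suppose that for every sequence $(x_n)$ in $X$ which statistically converges to $x_0$, the sequence $(f(x_n))$ converges to $f(x_0)$. Then $f$ is a constant function.
   Context: A $2$-normed space is a real linear space $X$ with $\dim X>1$ together with a function $\|\cdot,\cdot\|:X^2\to\mathbb{R}$ such that for all $x,y,z\in X$, $\alpha\in\mathbb{R}$: (1) $\|x,y\|=0$ iff $x,y$ are linearly dependent; (2) $\|x,y\|=\|y,x\|$; (3) $\|\alpha x,y\|=|\alpha|\|x,y\|$; (4) $\|x,y+z\|\le\|x,y\|+\|x,z\|$. A sequence $(x_n)$ in $X$ converges to $x\in X$ if $\lim_{n\to\infty}\|x_n-x,z\|=0$ for every $z\in X$. A sequence $(x_k)$ in $X$ statistically converges to $L\in X$ if for every $\epsilon>0$ and every $z\in X$, $\lim_{n\to\infty}\frac1n|\{k\le n:\|x_k-L,z\|\ge\epsilon\}|=0$. *)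

theory Defs
  imports Complex_Main
begin

definition lin_dep2 :: "'a::real_vector \<Rightarrow> 'a \<Rightarrow> bool" where
  "lin_dep2 x y \<longleftrightarrow> (\<exists>a b::real. (a \<noteq> 0 \<or> b \<noteq> 0) \<and> a *\<^sub>R x + b *\<^sub>R y = 0)"

text \<open>A 2-norm on the real vector space 'a (the carrier X is the whole type), with dim X > 1.\<close>
definition two_normed_space :: "('a::real_vector \<Rightarrow> 'a \<Rightarrow> real) \<Rightarrow> bool" where
  "two_normed_space N \<longleftrightarrow>
     (\<exists>x y::'a. \<not> lin_dep2 x y) \<and>
     (\<forall>x y. N x y = 0 \<longleftrightarrow> lin_dep2 x y) \<and>
     (\<forall>x y. N x y = N y x) \<and>
     (\<forall>x y (\<alpha>::real). N (\<alpha> *\<^sub>R x) y = \<bar>\<alpha>\<bar> * N x y) \<and>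
     (\<forall>x y z. N x (y + z) \<le> N x y + N x z)"

definition conv2 :: "('a::real_vector \<Rightarrow> 'a \<Rightarrow> real) \<Rightarrow> (nat \<Rightarrow> 'a) \<Rightarrow> 'a \<Rightarrow> bool" where
  "conv2 N x L \<longleftrightarrow> (\<forall>z. (\<lambda>n. N (x n - L) z) \<longlonglongrightarrow> 0)"

text \<open>Statistical convergence (terms indexed from 1: density of {k \<le> n}).\<close>
definition stat_conv2 :: "('a::real_vector \<Rightarrow> 'a \<Rightarrow> real) \<Rightarrow> (nat \<Rightarrow> 'a) \<Rightarrow> 'a \<Rightarrow> bool" where
  "stat_conv2 N x L \<longleftrightarrow> (\<forall>\<epsilon>>0. \<forall>z.
     (\<lambda>n. real (card {k \<in> {1..n}. N (x k - L) z \<ge> \<epsilon>}) / real n) \<longlonglongrightarrow> 0)"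

end

theory Submission
  imports Defs
begin

(*
  Fix y and perturb the constant sequence x0 on the squares:
  x k = y if k is a perfect square, x k = x0 otherwise.  The squares form a set of
  natural density zero, and a sequence that differs from L only on a density-zero set
  converges statistically to L (the 2-norm of 0 against anything vanishes).  By
  hypothesis f (x k) then converges to f x0 in the 2-normed sense, so the subsequence
  along the squares, which is constantly f y, also converges to f x0.  A constant
  sequence converges only to itself: this forces the 2-norm of f y - f x0 against
  every vector to vanish, and a vector that is linearly dependent with every vector
  of a space of dimension > 1 is zero.  Hence f y = f x0 for all y.
*)

definition density_zero :: "nat set \<Rightarrow> bool" where
  "density_zero S \<longleftrightarrow> (\<lambda>n. real (card {k \<in> {1..n}. k \<in> S}) / real n) \<longlonglongrightarrow> 0"

text \<open>Among 1, ..., n there are at most sqrt n + 1 perfect squares, since m^2 \<le> n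
  forces m \<le> sqrt n.\<close>
lemma card_squares_le:
  "real (card {k \<in> {1..n}. k \<in> range power2}) \<le> sqrt (real n) + 1"
proof -
  define r where "r = nat \<lfloor>sqrt (real n)\<rfloor>"
  have sub: "{k \<in> {1..n}. k \<in> range power2} \<subseteq> power2 ` {..r}"
  proof
    fix k assume "k \<in> {k \<in> {1..n}. k \<in> range power2}"
    then obtain m where k: "k = m\<^sup>2" "k \<le> n" by auto
    have "real m \<le> sqrt (real n)"
      using k by (intro real_le_rsqrt) (simp flip: of_nat_power)
    then have "m \<le> r"
      by (simp add: r_def le_nat_iff le_floor_iff)
    then show "k \<in> power2 ` {..r}" using k by auto
  qed
  have "card {k \<in> {1..n}. k \<in> range power2} \<le> card (power2 ` {..r})"
    by (rule card_mono[OF _ sub]) auto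
  also have "\<dots> \<le> card {..r}" by (rule card_image_le) auto
  finally have "real (card {k \<in> {1..n}. k \<in> range power2}) \<le> real r + 1"
    by simp
  also have "\<dots> \<le> sqrt (real n) + 1"
    using of_int_floor_le[of "sqrt (real n)"] by (simp add: r_def of_nat_nat)
  finally show ?thesis .
qed

lemma density_zero_squares: "density_zero (range power2)"
  unfolding density_zero_def
proof (rule tendsto_sandwich[of "\<lambda>n. 0" _ _ "\<lambda>n. (sqrt (real n) + 1) / real n"])
  show "\<forall>\<^sub>F n in sequentially. 0 \<le> real (card {k \<in> {1..n}. k \<in> range power2}) / real n"
    by simp
  show "\<forall>\<^sub>F n in sequentially.
      real (card {k \<in> {1..n}. k \<in> range power2}) / real n \<le> (sqrt (real n) + 1) / real n"
    using card_squares_le by (auto intro!: always_eventually divide_right_mono)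
  have lim: "(\<lambda>n. sqrt (inverse (real n)) + inverse (real n)) \<longlonglongrightarrow> sqrt 0 + 0"
    by (intro tendsto_add tendsto_real_sqrt lim_inverse_n)
  have rewrite: "sqrt (inverse (real n)) + inverse (real n) = (sqrt (real n) + 1) / real n"
    if "n > 0" for n
  proof -
    have "sqrt (real n) * inverse (real n) = inverse (sqrt (real n))"
      using that by (simp add: field_simps flip: real_sqrt_mult)
    then show ?thesis
      by (simp add: divide_inverse distrib_right real_sqrt_inverse)
  qed
  have "\<forall>\<^sub>F n in sequentially.
      sqrt (inverse (real n)) + inverse (real n) = (sqrt (real n) + 1) / real n"
    using eventually_gt_at_top[of "0::nat"] by eventually_elim (rule rewrite)
  from Lim_transform_eventually[OF lim this]
  show "(\<lambda>n. (sqrt (real n) + 1) / real n) \<longlonglongrightarrow> 0" by simp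
qed simp

text \<open>The zero vector is linearly dependent with anything, so its 2-norm against
  any vector vanishes.\<close>
lemma two_norm_zero_left:
  assumes "two_normed_space N"
  shows "N 0 z = 0"
proof -
  have "lin_dep2 0 z"
    unfolding lin_dep2_def by (rule exI[of _ 1], rule exI[of _ 0]) simp
  then show ?thesis using assms unfolding two_normed_space_def by blast
qed

lemma lin_dep2_multiple:
  fixes v w :: "'a::real_vector"
  assumes "v \<noteq> 0" and "lin_dep2 v w"
  shows "\<exists>t. w = t *\<^sub>R v"
proof -
  obtain p q :: real where pq: "p \<noteq> 0 \<or> q \<noteq> 0" "p *\<^sub>R v + q *\<^sub>R w = 0"
    using assms(2) unfolding lin_dep2_def by blast
  have q: "q \<noteq> 0" using pq assms(1) by auto
  have "q *\<^sub>R w = (- p) *\<^sub>R v"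
    using pq(2) by (simp add: eq_neg_iff_add_eq_0 add.commute)
  then have "(1/q) *\<^sub>R (q *\<^sub>R w) = (1/q) *\<^sub>R ((- p) *\<^sub>R v)" by simp
  then have "w = (- p / q) *\<^sub>R v" using q by simp
  then show ?thesis by blast
qed

lemma lin_dep2_multiples:
  fixes v :: "'a::real_vector"
  shows "lin_dep2 (s *\<^sub>R v) (t *\<^sub>R v)"
proof (cases "s = 0 \<and> t = 0")
  case True
  then show ?thesis unfolding lin_dep2_def by (intro exI[of _ 1] exI[of _ 0]) simp
next
  case False
  have "t *\<^sub>R (s *\<^sub>R v) + (- s) *\<^sub>R (t *\<^sub>R v) = 0" by (simp add: algebra_simps)
  then show ?thesis
    using False unfolding lin_dep2_def by (intro exI[of _ t] exI[of _ "- s"]) auto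
qed

text \<open>In a space of dimension > 1, only the zero vector is linearly dependent with
  every vector: otherwise all vectors would be multiples of a single one.\<close>
lemma dependent_with_all_imp_zero:
  fixes v :: "'a::real_vector"
  assumes "\<exists>x y::'a. \<not> lin_dep2 x y" and "\<forall>z. lin_dep2 v z"
  shows "v = 0"
proof (rule ccontr)
  assume v: "v \<noteq> 0"
  obtain a b :: 'a where ab: "\<not> lin_dep2 a b" using assms(1) by blast
  obtain s where s: "a = s *\<^sub>R v"
    using lin_dep2_multiple[OF v] assms(2) by blast
  obtain t where t: "b = t *\<^sub>R v"
    using lin_dep2_multiple[OF v] assms(2) by blast
  have "lin_dep2 a b" unfolding s t by (rule lin_dep2_multiples)
  with ab show False by contradiction
qed

lemma two_norm_zero_against_all:
  fixes N :: "'a::real_vector \<Rightarrow> 'a \<Rightarrow> real"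
  assumes "two_normed_space N" and "\<forall>z. N v z = 0"
  shows "v = 0"
proof (rule dependent_with_all_imp_zero)
  show "\<exists>x y::'a. \<not> lin_dep2 x y" and "\<forall>z. lin_dep2 v z"
    using assms unfolding two_normed_space_def by blast+
qed

text \<open>A sequence that agrees with L outside a set of density zero converges
  statistically to L: the exceptional indices are among those of S.\<close>
lemma stat_conv2_off_density_zero:
  assumes N: "two_normed_space N" and S: "density_zero S"
    and agree: "\<And>k. k \<notin> S \<Longrightarrow> x k = L"
  shows "stat_conv2 N x L"
  unfolding stat_conv2_def
proof (intro allI impI)
  fix \<epsilon> :: real and z assume e: "\<epsilon> > 0"
  have "{k \<in> {1..n}. N (x k - L) z \<ge> \<epsilon>} \<subseteq> {k \<in> {1..n}. k \<in> S}" for n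
    using e agree two_norm_zero_left[OF N] by fastforce
  then have "card {k \<in> {1..n}. N (x k - L) z \<ge> \<epsilon>} \<le> card {k \<in> {1..n}. k \<in> S}" for n
    by (intro card_mono) auto
  then have upper: "\<forall>\<^sub>F n in sequentially.
      real (card {k \<in> {1..n}. N (x k - L) z \<ge> \<epsilon>}) / real n
      \<le> real (card {k \<in> {1..n}. k \<in> S}) / real n"
    by (auto intro!: always_eventually divide_right_mono)
  have "(\<lambda>n. real (card {k \<in> {1..n}. k \<in> S}) / real n) \<longlonglongrightarrow> 0"
    using S unfolding density_zero_def .
  from tendsto_sandwich[OF _ upper tendsto_const this]
  show "(\<lambda>n. real (card {k \<in> {1..n}. N (x k - L) z \<ge> \<epsilon>}) / real n) \<longlonglongrightarrow> 0"
    by simp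
qed

lemma conv2_constant_subsequence:
  assumes N: "two_normed_space N" and conv: "conv2 N x L"
    and r: "strict_mono (r :: nat \<Rightarrow> nat)" and const: "\<And>m. x (r m) = c"
  shows "c = L"
proof -
  have "N (c - L) z = 0" for z
  proof -
    have "(\<lambda>n. N (x n - L) z) \<longlonglongrightarrow> 0" using conv unfolding conv2_def by blast
    from LIMSEQ_subseq_LIMSEQ[OF this r]
    have "(\<lambda>m. N (c - L) z) \<longlonglongrightarrow> 0" by (simp add: o_def const)
    then show ?thesis by (simp add: LIMSEQ_const_iff)
  qed
  then have "c - L = 0" using two_norm_zero_against_all[OF N] by blast
  then show ?thesis by simp
qed

theorem theorem3p2:
  fixes N :: "'a::real_vector \<Rightarrow> 'a \<Rightarrow> real" and f :: "'a \<Rightarrow> 'a" and x0 :: 'a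
  assumes "two_normed_space N"
    and "\<forall>x. stat_conv2 N x x0 \<longrightarrow> conv2 N (\<lambda>n. f (x n)) (f x0)"
  shows "\<exists>c. \<forall>x. f x = c"
proof -
  have "f y = f x0" for y
  proof -
    define x where "x = (\<lambda>k::nat. if k \<in> range power2 then y else x0)"
    have "stat_conv2 N x x0"
      using stat_conv2_off_density_zero[OF assms(1) density_zero_squares] by (simp add: x_def)
    then have "conv2 N (\<lambda>n. f (x n)) (f x0)" using assms(2) by blast
    moreover have "strict_mono (power2 :: nat \<Rightarrow> nat)"
      by (simp add: strict_mono_def power_strict_mono)
    moreover have "f (x (m\<^sup>2)) = f y" for m by (simp add: x_def)
    ultimately show ?thesis
      by (rule conv2_constant_subsequence[OF assms(1)])
  qed
  then show ?thesis by blast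
qed

end
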